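(* Let $t\le 1/2$ be a positive rational number and let $G$ be a minimally $t$-tough split graph whose vertex set is partitioned into a clique $C$ and an independent set $I$. Then there exists a positive integer $b$ such that $t=1/b$ and $|C|\le 3$. Moreover, either (1) $G$ is a tree with at most two internal (non-leaf) vertices and with maximum degree $\Delta(G)=b$, or (2) $|C|=3$, every vertex in $I$ has degree $1$, and every vertex in $C$ has degree $b+1$.
   Context: All graphs are finite, simple and undirected. A graph is split if its vertex set can be partitioned into a clique and an independent set. $\omega(H)$ denotes the number of components of $H$. A cutset of $G$ is a vertex set $S$ with $G-S$ disconnected. For positive real $t$, $G$ is $t$-tough if $\omega(G-S)\le |S|/t$ for every cutset $S$; the toughness $\tau(G)$ is the largest such $t$, with $\tau(K_n)=\infty$ for all $n\ge1$. $G$ is minimally $t$-tough if $\tau(G)=t$ and $\tau(G-e)<t$ for every edge $e$ of $G$. *)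

theory Defs
  imports Complex_Main "HOL-Library.Extended_Real"
begin

definition graph :: "'a set \<Rightarrow> 'a set set \<Rightarrow> bool" where
  "graph V E \<longleftrightarrow> finite V \<and> (\<forall>e\<in>E. \<exists>u v. u \<noteq> v \<and> u \<in> V \<and> v \<in> V \<and> e = {u, v})"

definition degree :: "'a set \<Rightarrow> 'a set set \<Rightarrow> 'a \<Rightarrow> nat" where
  "degree V E v = card {u \<in> V. {u, v} \<in> E}"

definition max_degree :: "'a set \<Rightarrow> 'a set set \<Rightarrow> nat" where
  "max_degree V E = Max (degree V E ` V)"

definition reach_in :: "'a set \<Rightarrow> 'a set set \<Rightarrow> 'a \<Rightarrow> 'a \<Rightarrow> bool" where
  "reach_in W E = (\<lambda>x y. x \<in> W \<and> y \<in> W \<and> {x, y} \<in> E)\<^sup>*\<^sup>*"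

definition components :: "'a set \<Rightarrow> 'a set set \<Rightarrow> 'a set set" where
  "components W E = {{y \<in> W. reach_in W E x y} | x. x \<in> W}"

definition num_comp :: "'a set \<Rightarrow> 'a set set \<Rightarrow> 'a set \<Rightarrow> nat" where
  "num_comp V E S = card (components (V - S) E)"

definition connected_graph :: "'a set \<Rightarrow> 'a set set \<Rightarrow> bool" where
  "connected_graph V E \<longleftrightarrow> V \<noteq> {} \<and> (\<forall>x\<in>V. \<forall>y\<in>V. reach_in V E x y)"

definition cutset :: "'a set \<Rightarrow> 'a set set \<Rightarrow> 'a set \<Rightarrow> bool" where
  "cutset V E S \<longleftrightarrow> S \<subseteq> V \<and> num_comp V E S \<ge> 2"

definition tough :: "real \<Rightarrow> 'a set \<Rightarrow> 'a set set \<Rightarrow> bool" where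
  "tough t V E \<longleftrightarrow> (\<forall>S. cutset V E S \<longrightarrow> real (num_comp V E S) \<le> real (card S) / t)"

text \<open>Toughness: the largest t such that G is t-tough (infinity if G has no cutset,
  e.g. complete graphs; 0 if no positive t works, i.e. disconnected graphs).\<close>
definition toughness :: "'a set \<Rightarrow> 'a set set \<Rightarrow> ereal" where
  "toughness V E = Sup ({0} \<union> {ereal t | t. t > 0 \<and> tough t V E})"

definition minimally_tough :: "real \<Rightarrow> 'a set \<Rightarrow> 'a set set \<Rightarrow> bool" where
  "minimally_tough t V E \<longleftrightarrow>
     toughness V E = ereal t \<and> (\<forall>e\<in>E. toughness V (E - {e}) < ereal t)"

definition is_clique :: "'a set set \<Rightarrow> 'a set \<Rightarrow> bool" where
  "is_clique E C \<longleftrightarrow> (\<forall>u\<in>C. \<forall>v\<in>C. u \<noteq> v \<longrightarrow> {u, v} \<in> E)"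

definition is_independent :: "'a set set \<Rightarrow> 'a set \<Rightarrow> bool" where
  "is_independent E I \<longleftrightarrow> (\<forall>u\<in>I. \<forall>v\<in>I. {u, v} \<notin> E)"

definition split_partition :: "'a set \<Rightarrow> 'a set set \<Rightarrow> 'a set \<Rightarrow> 'a set \<Rightarrow> bool" where
  "split_partition V E C I \<longleftrightarrow> C \<union> I = V \<and> C \<inter> I = {} \<and> is_clique E C \<and> is_independent E I"

definition is_cycle :: "'a set \<Rightarrow> 'a set set \<Rightarrow> 'a list \<Rightarrow> bool" where
  "is_cycle V E xs \<longleftrightarrow> length xs \<ge> 3 \<and> distinct xs \<and> set xs \<subseteq> V \<and>
     (\<forall>i. Suc i < length xs \<longrightarrow> {xs ! i, xs ! Suc i} \<in> E) \<and> {last xs, hd xs} \<in> E"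

definition is_tree :: "'a set \<Rightarrow> 'a set set \<Rightarrow> bool" where
  "is_tree V E \<longleftrightarrow> connected_graph V E \<and> \<not> (\<exists>xs. is_cycle V E xs)"

definition internal_vertices :: "'a set \<Rightarrow> 'a set set \<Rightarrow> 'a set" where
  "internal_vertices V E = {v \<in> V. degree V E v \<noteq> 1}"

end

theory Submission
  imports Defs
begin

text \<open>In a split graph with clique C and independent set I, the graph G - S consists of the
  component containing C - S (if this is nonempty) together with the vertices of I - S all of
  whose neighbours lie in S, so toughness only counts these stranded vertices. Minimality
  applied to a clique edge uw yields a small set S that meets C in C - {u, w} and contains the
  common neighbours of u and w; comparing it with the cutsets C - {u, w} and {x} shows that
  every vertex of I is a leaf, that |C| \<le> 3, and that for |C| = 3 all clique vertices carry
  the same number of leaves. With m the largest number of leaves at a clique vertex, G is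
  1/b-tough for b = m (if |C| = 1) or b = m + 1 (if |C| \<ge> 2), and deleting a clique vertex
  with m leaves produces exactly b components, so t = 1/b. For |C| \<le> 2 a cycle would have to
  lie inside C, so G is a tree.\<close>

section \<open>Reachability, components and cycles\<close>

definition component_of :: "'a set \<Rightarrow> 'a set set \<Rightarrow> 'a \<Rightarrow> 'a set" where
  "component_of W F x = {y \<in> W. reach_in W F x y}"

lemma components_eq_image: "components W F = component_of W F ` W"
  by (auto simp: components_def component_of_def)

lemma reach_in_refl: "reach_in W F x x"
  unfolding reach_in_def by simp

lemma reach_in_sym: "reach_in W F x y \<Longrightarrow> reach_in W F y x"
  unfolding reach_in_def
  by (induction rule: rtranclp_induct)
     (auto simp: insert_commute intro: converse_rtranclp_into_rtranclp)

lemma reach_in_trans: "reach_in W F x y \<Longrightarrow> reach_in W F y z \<Longrightarrow> reach_in W F x z"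
  unfolding reach_in_def by (rule rtranclp_trans)

lemma reach_in_edge: "x \<in> W \<Longrightarrow> y \<in> W \<Longrightarrow> {x, y} \<in> F \<Longrightarrow> reach_in W F x y"
  unfolding reach_in_def by (rule r_into_rtranclp) simp

lemma component_of_self: "x \<in> W \<Longrightarrow> x \<in> component_of W F x"
  unfolding component_of_def by (simp add: reach_in_refl)

lemma component_of_eqI: "reach_in W F x z \<Longrightarrow> component_of W F x = component_of W F z"
  unfolding component_of_def by (auto intro: reach_in_trans reach_in_sym)

lemma component_of_isolated:
  assumes "x \<in> W" "\<forall>z\<in>W. {x, z} \<notin> F"
  shows "component_of W F x = {x}"
proof -
  have "reach_in W F x y \<Longrightarrow> y = x" for y
    unfolding reach_in_def by (induction rule: rtranclp_induct) (use assms in auto)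
  then show ?thesis
    using assms unfolding component_of_def by (auto intro: reach_in_refl)
qed

lemma finite_components: "finite W \<Longrightarrow> finite (components W F)"
  by (simp add: components_eq_image)

lemma card_components_le: "finite W \<Longrightarrow> card (components W F) \<le> card W"
  by (simp add: components_eq_image card_image_le)

lemma connected_graphI:
  assumes "finite V" "V \<noteq> {}" "card (components V E) \<le> 1"
  shows "connected_graph V E"
  unfolding connected_graph_def
proof (intro conjI ballI)
  fix x y assume "x \<in> V" "y \<in> V"
  then have "component_of V E x \<in> components V E" "component_of V E y \<in> components V E"
    by (auto simp: components_eq_image)
  then have "component_of V E x = component_of V E y"
    using assms(3) card_le_Suc0_iff_eq[OF finite_components[OF assms(1)]] by auto
  then show "reach_in V E x y"
    using component_of_self[OF \<open>y \<in> V\<close>] by (auto simp: component_of_def)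
qed (rule assms(2))

lemma is_cycle_two_neighbours:
  assumes "is_cycle V E xs" "v \<in> set xs"
  shows "\<exists>a b. a \<noteq> b \<and> {a, v} \<in> E \<and> {b, v} \<in> E"
proof -
  define n where "n = length xs"
  have n3: "3 \<le> n" and dist: "distinct xs"
    and step: "\<And>i. Suc i < n \<Longrightarrow> {xs ! i, xs ! Suc i} \<in> E"
    and close': "{last xs, hd xs} \<in> E"
    using assms(1) by (auto simp: is_cycle_def n_def)
  have close: "{xs ! (n - 1), xs ! 0} \<in> E"
  proof -
    have "xs \<noteq> []" using n3 by (auto simp: n_def)
    then show ?thesis using close' by (simp add: n_def last_conv_nth hd_conv_nth)
  qed
  have neq: "xs ! i \<noteq> xs ! j" if "i < n" "j < n" "i \<noteq> j" for i j
    using dist that by (simp add: n_def nth_eq_iff_index_eq)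
  obtain i where i: "i < n" "v = xs ! i"
    using assms(2) by (auto simp: n_def in_set_conv_nth)
  consider "i = 0" | "i = n - 1" "i \<noteq> 0" | "0 < i" "i < n - 1" using i by linarith
  then show ?thesis
  proof cases
    case 1
    then show ?thesis
      using i n3 step[of 0] close neq[of 1 "n - 1"]
      by (intro exI[of _ "xs ! 1"] exI[of _ "xs ! (n - 1)"]) (auto simp: insert_commute)
  next
    case 2
    then show ?thesis
      using i n3 step[of "n - 2"] close neq[of "n - 2" 0]
      by (intro exI[of _ "xs ! (n - 2)"] exI[of _ "xs ! 0"])
        (auto simp: insert_commute Suc_diff_Suc numeral_2_eq_2)
  next
    case 3
    then show ?thesis
      using i n3 step[of "i - 1"] step[of i] neq[of "i - 1" "Suc i"]
      by (intro exI[of _ "xs ! (i - 1)"] exI[of _ "xs ! Suc i"]) (auto simp: insert_commute)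
  qed
qed

section \<open>Toughness\<close>

lemma tough_iff:
  assumes "t > 0"
  shows "tough t V E \<longleftrightarrow> (\<forall>S. cutset V E S \<longrightarrow> t * real (num_comp V E S) \<le> real (card S))"
  using assms by (simp add: tough_def pos_le_divide_eq mult.commute)

lemma le_toughness: "t > 0 \<Longrightarrow> tough t V E \<Longrightarrow> ereal t \<le> toughness V E"
  unfolding toughness_def by (rule Sup_upper) auto

lemma tough_if_toughness_eq:
  assumes "toughness V E = ereal t" "t > 0"
  shows "tough t V E"
  unfolding tough_iff[OF \<open>t > 0\<close>]
proof (intro allI impI)
  fix S assume S: "cutset V E S"
  define q where "q = real (card S) / real (num_comp V E S)"
  have pos: "real (num_comp V E S) > 0"
    using S by (simp add: cutset_def)
  have "toughness V E \<le> ereal q"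
    unfolding toughness_def
  proof (rule Sup_least, safe)
    show "0 \<le> ereal q" by (simp add: q_def)
    fix t' assume "t' > 0" "tough t' V E"
    then show "ereal t' \<le> ereal q"
      using S pos by (simp add: tough_iff q_def pos_le_divide_eq)
  qed
  then show "t * real (num_comp V E S) \<le> real (card S)"
    using assms pos by (simp add: q_def pos_le_divide_eq)
qed

lemma minimally_tough_edge_cutset:
  assumes "minimally_tough t V E" "t > 0" "e \<in> E"
  shows "\<exists>S. cutset V (E - {e}) S \<and> real (card S) < t * real (num_comp V (E - {e}) S)"
proof (rule ccontr)
  assume "\<not> ?thesis"
  then have "tough t V (E - {e})"
    using assms(2) by (auto simp: tough_iff not_less)
  then have "ereal t \<le> toughness V (E - {e})"
    using assms(2) by (rule le_toughness[rotated])
  then show False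
    using assms(1,3) by (auto simp: minimally_tough_def)
qed

section \<open>Components in split graphs\<close>

locale split_graph =
  fixes V :: "'a set" and E :: "'a set set" and C I :: "'a set"
  assumes graph: "graph V E" and split: "split_partition V E C I"
begin

lemma finite_V: "finite V"
  using graph by (simp add: graph_def)

lemma V_eq: "V = C \<union> I"
  using split by (simp add: split_partition_def)

lemma clique_indep_disjoint: "C \<inter> I = {}"
  using split by (simp add: split_partition_def)

lemma clique_edge: "u \<in> C \<Longrightarrow> v \<in> C \<Longrightarrow> u \<noteq> v \<Longrightarrow> {u, v} \<in> E"
  using split by (simp add: split_partition_def is_clique_def)

lemma indep_no_edge: "u \<in> I \<Longrightarrow> v \<in> I \<Longrightarrow> {u, v} \<notin> E"
  using split by (simp add: split_partition_def is_independent_def)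

lemma finite_C: "finite C"
  using finite_V V_eq by simp

lemma finite_I: "finite I"
  using finite_V V_eq by simp

lemma edge_endpoints: "{u, v} \<in> E \<Longrightarrow> u \<noteq> v \<and> u \<in> V \<and> v \<in> V"
  using graph unfolding graph_def by (fastforce simp: doubleton_eq_iff)

lemma neighbour_of_indep: "y \<in> I \<Longrightarrow> {x, y} \<in> E \<Longrightarrow> x \<in> C"
  using edge_endpoints[of x y] indep_no_edge[of x y] V_eq by auto

definition isolated_I :: "'a set set \<Rightarrow> 'a set \<Rightarrow> 'a set" where
  "isolated_I F S = {y \<in> I - S. \<forall>x \<in> V - S. {x, y} \<notin> F}"

lemma finite_isolated_I: "finite (isolated_I F S)"
  using finite_I by (auto simp: isolated_I_def)

lemma isolated_I_remove_clique_edge: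
  "u \<in> C \<Longrightarrow> w \<in> C \<Longrightarrow> isolated_I (E - {{u, w}}) S = isolated_I E S"
  using clique_indep_disjoint unfolding isolated_I_def by (auto simp: doubleton_eq_iff)

lemma components_subset:
  assumes "F \<subseteq> E" "S \<subseteq> V"
  shows "components (V - S) F \<subseteq>
           component_of (V - S) F ` (C - S) \<union> (\<lambda>y. {y}) ` isolated_I F S"
proof
  fix K assume "K \<in> components (V - S) F"
  then obtain x where x: "x \<in> V - S" "K = component_of (V - S) F x"
    by (auto simp: components_eq_image)
  show "K \<in> component_of (V - S) F ` (C - S) \<union> (\<lambda>y. {y}) ` isolated_I F S"
  proof (cases "x \<in> C")
    case True
    then show ?thesis using x by auto
  next
    case False
    then have "x \<in> I" using x V_eq by auto
    show ?thesis
    proof (cases "\<exists>z \<in> V - S. {z, x} \<in> F")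
      case True
      then obtain z where z: "z \<in> V - S" "{z, x} \<in> F" by auto
      then have "z \<in> C" using neighbour_of_indep[OF \<open>x \<in> I\<close>] assms(1) by auto
      moreover have "reach_in (V - S) F x z"
        using x z by (intro reach_in_edge) (auto simp: insert_commute)
      then have "K = component_of (V - S) F z" using x component_of_eqI by metis
      ultimately show ?thesis using z by auto
    next
      case False
      then have "x \<in> isolated_I F S" using x \<open>x \<in> I\<close> by (auto simp: isolated_I_def)
      moreover have "K = {x}"
        using x False component_of_isolated[of x "V - S" F] by (auto simp: insert_commute)
      ultimately show ?thesis by auto
    qed
  qed
qed

lemma singletons_isolated_I_subset_components:
  "S \<subseteq> V \<Longrightarrow> (\<lambda>y. {y}) ` isolated_I F S \<subseteq> components (V - S) F"
proof
  fix K assume "K \<in> (\<lambda>y. {y}) ` isolated_I F S"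
  then obtain y where y: "y \<in> isolated_I F S" "K = {y}" by auto
  then have "y \<in> V - S" unfolding isolated_I_def using V_eq by auto
  moreover have "component_of (V - S) F y = {y}"
    using y \<open>y \<in> V - S\<close>
    by (intro component_of_isolated) (auto simp: isolated_I_def insert_commute)
  ultimately show "K \<in> components (V - S) F" using y by (auto simp: components_eq_image)
qed

lemma card_components_eq_if_clique_connected:
  assumes "F \<subseteq> E" "S \<subseteq> V"
    and conn: "\<And>a b. a \<in> C - S \<Longrightarrow> b \<in> C - S \<Longrightarrow> reach_in (V - S) F a b"
  shows "card (components (V - S) F) = (if C \<subseteq> S then 0 else 1) + card (isolated_I F S)"
proof -
  let ?K = "component_of (V - S) F" and ?Z = "(\<lambda>y. {y}) ` isolated_I F S"
  have card_Z: "card ?Z = card (isolated_I F S)"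
    by (rule card_image) (auto simp: inj_on_def)
  have fin: "finite (components (V - S) F)"
    using finite_V by (simp add: finite_components)
  show ?thesis
  proof (cases "C \<subseteq> S")
    case True
    then have "components (V - S) F = ?Z"
      using components_subset[OF assms(1,2)] singletons_isolated_I_subset_components[OF assms(2), of F]
      by auto
    then show ?thesis using True card_Z by simp
  next
    case False
    then obtain a where a: "a \<in> C - S" by auto
    have "?K b = ?K a" if "b \<in> C - S" for b
      using conn[OF that a] by (rule component_of_eqI)
    then have "?K ` (C - S) = {?K a}"
      using a by blast
    then have "components (V - S) F = insert (?K a) ?Z"
      using components_subset[OF assms(1,2)] singletons_isolated_I_subset_components[OF assms(2), of F] a V_eq
      by (auto simp: components_eq_image)
    moreover have "?K a \<notin> ?Z"
    proof -
      have "a \<in> ?K a" using a V_eq by (intro component_of_self) auto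
      moreover have "a \<notin> isolated_I F S"
        using a clique_indep_disjoint by (auto simp: isolated_I_def)
      ultimately show ?thesis by auto
    qed
    ultimately show ?thesis
      using False card_Z finite_isolated_I by simp
  qed
qed

lemma num_comp_eq:
  assumes "S \<subseteq> V"
  shows "num_comp V E S = (if C \<subseteq> S then 0 else 1) + card (isolated_I E S)"
  unfolding num_comp_def
proof (rule card_components_eq_if_clique_connected[OF order_refl assms])
  fix a b assume "a \<in> C - S" "b \<in> C - S"
  then show "reach_in (V - S) E a b"
    using clique_edge[of a b] V_eq by (cases "a = b") (auto intro: reach_in_refl reach_in_edge)
qed

lemma card_components_le_two_if_clique_edge_cut:
  assumes "F \<subseteq> E" "S \<subseteq> V" "C - S \<subseteq> {u, w}"
  shows "card (components (V - S) F) \<le> 2 + card (isolated_I F S)"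
proof -
  let ?K = "component_of (V - S) F ` (C - S)" and ?Z = "(\<lambda>y. {y}) ` isolated_I F S"
  have "card ?K \<le> card (C - S)" by (rule card_image_le) (use finite_C in auto)
  also have "\<dots> \<le> card {u, w}" by (rule card_mono) (use assms(3) in auto)
  also have "\<dots> \<le> 2" by (cases "u = w") auto
  finally have K: "card ?K \<le> 2" .
  have Z: "card ?Z \<le> card (isolated_I F S)" by (rule card_image_le[OF finite_isolated_I])
  have "card (components (V - S) F) \<le> card (?K \<union> ?Z)"
    by (rule card_mono) (use components_subset[OF assms(1,2)] finite_C finite_isolated_I in auto)
  also have "\<dots> \<le> card ?K + card ?Z" by (rule card_Un_le)
  finally show ?thesis using K Z by linarith
qed

lemma reach_in_remove_clique_edge:
  assumes "u \<in> C" "w \<in> C" "a \<in> C - S" "b \<in> C - S"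
    and via: "u \<in> S \<or> w \<in> S \<or> (\<exists>x \<in> V - S - {u, w}. {u, x} \<in> E \<and> {w, x} \<in> E)"
  shows "reach_in (V - S) (E - {{u, w}}) a b"
proof -
  consider "a = b" | "a \<noteq> b" "{a, b} \<noteq> {u, w}" | "{a, b} = {u, w}" by blast
  then show ?thesis
  proof cases
    case 1
    then show ?thesis by (simp add: reach_in_refl)
  next
    case 2
    then show ?thesis
      using assms(3,4) clique_edge[of a b] V_eq by (intro reach_in_edge) auto
  next
    case 3
    then have "u \<notin> S" "w \<notin> S" using assms(3,4) by (auto simp: doubleton_eq_iff)
    then obtain x where x: "x \<in> V - S - {u, w}" "{u, x} \<in> E" "{w, x} \<in> E" using via by blast
    have "{a, x} \<in> E" "{x, b} \<in> E"
      using 3 x by (auto simp: doubleton_eq_iff insert_commute)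
    then have "reach_in (V - S) (E - {{u, w}}) a x" "reach_in (V - S) (E - {{u, w}}) x b"
      using 3 x assms(3,4) V_eq by (auto intro!: reach_in_edge simp: doubleton_eq_iff)
    then show ?thesis by (rule reach_in_trans)
  qed
qed

end

section \<open>Minimally t-tough split graphs with t \<le> 1/2\<close>

locale min_tough_split_graph = split_graph +
  fixes t :: real
  assumes t_pos: "t > 0" and t_le_half: "t \<le> 1/2"
    and minimally_tough: "minimally_tough t V E"
begin

lemma le_t_if_tough: "t' > 0 \<Longrightarrow> tough t' V E \<Longrightarrow> t' \<le> t"
  using le_toughness minimally_tough by (fastforce simp: minimally_tough_def)

lemma cutset_bound: "cutset V E S \<Longrightarrow> t * real (num_comp V E S) \<le> real (card S)"
  using minimally_tough t_pos tough_if_toughness_eq[of V E t]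
  by (simp add: minimally_tough_def tough_iff)

lemma two_le_card_V: "2 \<le> card V"
proof (rule ccontr)
  assume small: "\<not> 2 \<le> card V"
  have "\<not> cutset V E S" for S
  proof -
    have "num_comp V E S \<le> card (V - S)"
      unfolding num_comp_def using finite_V by (simp add: card_components_le)
    also have "\<dots> \<le> card V" using finite_V by (simp add: card_mono)
    finally show ?thesis using small by (simp add: cutset_def)
  qed
  then have "tough 1 V E" by (simp add: tough_def)
  then show False using le_t_if_tough[of 1] t_le_half by simp
qed

lemma num_comp_empty_le_1: "num_comp V E {} \<le> 1"
proof (rule ccontr)
  assume many: "\<not> num_comp V E {} \<le> 1"
  then have "cutset V E {}" by (simp add: cutset_def)
  then have "t * real (num_comp V E {}) \<le> 0" using cutset_bound by fastforce
  then show False using many t_pos by (simp add: mult_le_0_iff)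
qed

lemma clique_nonempty: "C \<noteq> {}"
proof
  assume "C = {}"
  then have "isolated_I E {} = V"
    using V_eq neighbour_of_indep unfolding isolated_I_def by auto
  then have "num_comp V E {} = card V" using num_comp_eq[of "{}"] \<open>C = {}\<close> by simp
  then show False using num_comp_empty_le_1 two_le_card_V by simp
qed

lemma indep_has_neighbour: "y \<in> I \<Longrightarrow> \<exists>x. {x, y} \<in> E"
proof (rule ccontr)
  assume "y \<in> I" "\<nexists>x. {x, y} \<in> E"
  then have "isolated_I E {} \<noteq> {}" by (auto simp: isolated_I_def)
  then have "card (isolated_I E {}) \<noteq> 0" using finite_isolated_I by simp
  then show False using num_comp_eq[of "{}"] clique_nonempty num_comp_empty_le_1 by simp
qed

lemma connected: "connected_graph V E"
  using num_comp_empty_le_1 finite_V clique_nonempty V_eq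
  by (intro connected_graphI) (auto simp: num_comp_def)

lemma isolated_I_bound:
  assumes "S \<subseteq> V" "\<not> C \<subseteq> S"
  shows "t * real (card (isolated_I E S)) \<le> real (card S)"
proof (cases "isolated_I E S = {}")
  case False
  then have "num_comp V E S = 1 + card (isolated_I E S)" "card (isolated_I E S) \<noteq> 0"
    using num_comp_eq[OF assms(1)] assms(2) finite_isolated_I by simp_all
  then have "t * (1 + real (card (isolated_I E S))) \<le> real (card S)"
    using cutset_bound[of S] assms(1) by (simp add: cutset_def)
  then show ?thesis using t_pos by (simp add: algebra_simps)
qed simp

text \<open>Minimality gives a cutset S of G - uw that is too small to be a cutset of G; hence
  removing uw must disconnect C - S, which pins down how S meets C and N(u) \<inter> N(w).\<close>

lemma clique_edge_separator:
  assumes "u \<in> C" "w \<in> C" "u \<noteq> w"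
  obtains S where "S \<subseteq> V" "C \<inter> S = C - {u, w}"
    and "\<And>v. v \<in> I \<Longrightarrow> {u, v} \<in> E \<Longrightarrow> {w, v} \<in> E \<Longrightarrow> v \<in> S"
    and "real (card S) < t * (2 + real (card (isolated_I E S)))"
proof -
  let ?F = "E - {{u, w}}"
  obtain S where cut: "cutset V ?F S" and small: "real (card S) < t * real (num_comp V ?F S)"
    using minimally_tough_edge_cutset[OF minimally_tough t_pos] clique_edge[OF assms] by blast
  have SV: "S \<subseteq> V" using cut by (simp add: cutset_def)
  have Z: "isolated_I ?F S = isolated_I E S"
    using isolated_I_remove_clique_edge[OF assms(1,2)] .
  have sep: "u \<notin> S \<and> w \<notin> S \<and> \<not> (\<exists>x \<in> V - S - {u, w}. {u, x} \<in> E \<and> {w, x} \<in> E)"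
  proof (rule ccontr)
    assume "\<not> ?thesis"
    then have via: "u \<in> S \<or> w \<in> S \<or> (\<exists>x \<in> V - S - {u, w}. {u, x} \<in> E \<and> {w, x} \<in> E)"
      by blast
    have "num_comp V ?F S = (if C \<subseteq> S then 0 else 1) + card (isolated_I ?F S)"
      unfolding num_comp_def
      by (rule card_components_eq_if_clique_connected)
        (use SV reach_in_remove_clique_edge[OF assms(1,2) _ _ via] in auto)
    then have "num_comp V ?F S = num_comp V E S"
      using num_comp_eq[OF SV] Z by simp
    then show False
      using cut small cutset_bound[of S] by (simp add: cutset_def)
  qed
  have CS: "C \<inter> S = C - {u, w}"
  proof
    show "C \<inter> S \<subseteq> C - {u, w}" using sep by blast
    show "C - {u, w} \<subseteq> C \<inter> S"
    proof
      fix x assume x: "x \<in> C - {u, w}"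
      then have "{u, x} \<in> E" "{w, x} \<in> E" "x \<in> V"
        using assms clique_edge V_eq by auto
      then show "x \<in> C \<inter> S" using sep x by blast
    qed
  qed
  moreover have "v \<in> S" if "v \<in> I" "{u, v} \<in> E" "{w, v} \<in> E" for v
  proof -
    have "v \<in> V - {u, w}" using that V_eq clique_indep_disjoint assms(1,2) by auto
    then show ?thesis using sep that by blast
  qed
  moreover have "real (card S) < t * (2 + real (card (isolated_I E S)))"
  proof -
    have "C - S \<subseteq> {u, w}" using CS by blast
    then have "num_comp V ?F S \<le> 2 + card (isolated_I E S)"
      using card_components_le_two_if_clique_edge_cut[of ?F S u w] SV Z
      unfolding num_comp_def by simp
    then have "t * real (num_comp V ?F S) \<le> t * (2 + real (card (isolated_I E S)))"
      using t_pos by (intro mult_left_mono) auto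
    then show ?thesis using small by linarith
  qed
  ultimately show thesis by (rule that[OF SV])
qed

lemma isolated_I_subset_clique_part: "isolated_I E S \<subseteq> isolated_I E (C \<inter> S)"
  using neighbour_of_indep clique_indep_disjoint unfolding isolated_I_def by blast

lemma indep_neighbour_unique:
  assumes y: "y \<in> I" and "{u, y} \<in> E" "{w, y} \<in> E"
  shows "u = w"
proof (rule ccontr)
  assume "u \<noteq> w"
  have "u \<in> C" "w \<in> C" using neighbour_of_indep y assms by auto
  then obtain S where SV: "S \<subseteq> V" and CS: "C \<inter> S = C - {u, w}" and "y \<in> S"
    and small: "real (card S) < t * (2 + real (card (isolated_I E S)))"
    using clique_edge_separator[OF _ _ \<open>u \<noteq> w\<close>] y assms by metis
  let ?T = "C \<inter> S"
  have "card (insert y ?T) \<le> card S"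
    using SV \<open>y \<in> S\<close> finite_V by (intro card_mono) (auto intro: finite_subset)
  moreover have "y \<notin> ?T" using y clique_indep_disjoint by blast
  ultimately have T: "card ?T + 1 \<le> card S"
    using finite_C by simp
  have "card (isolated_I E S) \<le> card (isolated_I E ?T)"
    by (intro card_mono finite_isolated_I isolated_I_subset_clique_part)
  moreover have "t * real (card (isolated_I E ?T)) \<le> real (card ?T)"
    using isolated_I_bound[of ?T] CS \<open>u \<in> C\<close> V_eq by auto
  ultimately have "t * real (card (isolated_I E S)) \<le> real (card ?T)"
    using t_pos by (meson mult_left_mono of_nat_le_iff less_imp_le order_trans)
  then show False using small T t_le_half by (simp add: algebra_simps)
qed

definition leaves :: "'a \<Rightarrow> 'a set" where
  "leaves x = {y \<in> I. {x, y} \<in> E}"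

definition max_leaves :: nat where
  "max_leaves = Max ((\<lambda>x. card (leaves x)) ` C)"

lemma finite_leaves: "finite (leaves x)"
  using finite_I by (simp add: leaves_def)

lemma card_leaves_le_max: "x \<in> C \<Longrightarrow> card (leaves x) \<le> max_leaves"
  unfolding max_leaves_def using finite_C by (intro Max_ge) auto

lemma max_leaves_attained:
  obtains x where "x \<in> C" "card (leaves x) = max_leaves"
proof -
  have "max_leaves \<in> (\<lambda>x. card (leaves x)) ` C"
    unfolding max_leaves_def using finite_C clique_nonempty by (intro Max_in) auto
  then show thesis using that by (auto simp del: max_leaves_def)
qed

lemma isolated_I_subset_leaves: "isolated_I E S \<subseteq> (\<Union>x \<in> C \<inter> S. leaves x)"
proof
  fix y assume y: "y \<in> isolated_I E S"
  then have "y \<in> I" by (simp add: isolated_I_def)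
  then obtain x where x: "{x, y} \<in> E" using indep_has_neighbour by blast
  then have "x \<in> C" "x \<in> V" using neighbour_of_indep[OF \<open>y \<in> I\<close>] edge_endpoints by auto
  then have "x \<in> S" using y x by (auto simp: isolated_I_def)
  then show "y \<in> (\<Union>x \<in> C \<inter> S. leaves x)"
    using \<open>x \<in> C\<close> x \<open>y \<in> I\<close> by (auto simp: leaves_def)
qed

lemma card_isolated_I_le: "card (isolated_I E S) \<le> max_leaves * card (C \<inter> S)"
proof -
  have "card (isolated_I E S) \<le> card (\<Union>x \<in> C \<inter> S. leaves x)"
    by (intro card_mono isolated_I_subset_leaves) (use finite_C finite_leaves in auto)
  also have "\<dots> \<le> (\<Sum>x \<in> C \<inter> S. card (leaves x))"
    by (rule card_UN_le) (use finite_C in auto)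
  also have "\<dots> \<le> (\<Sum>x \<in> C \<inter> S. max_leaves)"
    by (rule sum_mono) (use card_leaves_le_max in auto)
  finally show ?thesis by (simp add: mult.commute)
qed

lemma num_comp_singleton:
  assumes "x \<in> C"
  shows "num_comp V E {x} = (if C = {x} then 0 else 1) + card (leaves x)"
proof -
  have "isolated_I E {x} = leaves x"
  proof
    show "isolated_I E {x} \<subseteq> leaves x"
      using isolated_I_subset_leaves[of "{x}"] assms by auto
    show "leaves x \<subseteq> isolated_I E {x}"
      using assms clique_indep_disjoint indep_neighbour_unique
      unfolding leaves_def isolated_I_def by blast
  qed
  then show ?thesis using num_comp_eq[of "{x}"] assms V_eq by auto
qed

lemma leaves_bound:
  assumes "2 \<le> card C" "x \<in> C"
  shows "t * (1 + real (card (leaves x))) \<le> 1"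
proof (cases "leaves x = {}")
  case True
  then show ?thesis using t_le_half by simp
next
  case False
  have "C \<noteq> {x}" using assms(1) by auto
  then have nc: "num_comp V E {x} = 1 + card (leaves x)"
    using num_comp_singleton[OF assms(2)] by simp
  moreover have "card (leaves x) \<noteq> 0" using False finite_leaves[of x] by simp
  ultimately have "cutset V E {x}"
    using assms(2) V_eq by (auto simp: cutset_def)
  then show ?thesis using cutset_bound[of "{x}"] nc by simp
qed

lemma card_clique_le_3: "card C \<le> 3"
proof (rule ccontr)
  assume "\<not> card C \<le> 3"
  then obtain u w where uw: "u \<in> C" "w \<in> C" "u \<noteq> w"
    using card_le_Suc0_iff_eq[OF finite_C] by fastforce
  obtain S where SV: "S \<subseteq> V" and CS: "C \<inter> S = C - {u, w}"
    and small: "real (card S) < t * (2 + real (card (isolated_I E S)))"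
    using clique_edge_separator[OF uw] by metis
  define k where "k = real (card C) - 2"
  have "k \<ge> 2" using \<open>\<not> card C \<le> 3\<close> by (simp add: k_def)
  have "card (C \<inter> S) = card C - 2" using CS uw finite_C by (simp add: card_Diff_subset)
  then have k: "real (card (C \<inter> S)) = k" using \<open>k \<ge> 2\<close> by (simp add: k_def of_nat_diff)
  have "card (C \<inter> S) \<le> card S" using SV finite_V by (intro card_mono) (auto intro: finite_subset)
  then have "k \<le> real (card S)" using k by linarith
  moreover have "real (card (isolated_I E S)) \<le> real max_leaves * k"
    using card_isolated_I_le[of S] k by (metis of_nat_le_iff of_nat_mult)
  then have "t * (2 + real (card (isolated_I E S))) \<le> t * (2 + real max_leaves * k)"
    using t_pos by (intro mult_left_mono) auto
  ultimately have "k < t * (2 + real max_leaves * k)" using small by linarith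
  moreover obtain x where "x \<in> C" "card (leaves x) = max_leaves" by (rule max_leaves_attained)
  then have "t * real max_leaves \<le> 1 - t"
    using leaves_bound[of x] \<open>\<not> card C \<le> 3\<close> by (simp add: algebra_simps)
  then have "t * real max_leaves * k \<le> (1 - t) * k"
    using \<open>k \<ge> 2\<close> by (intro mult_right_mono) auto
  ultimately have "t * k < 2 * t" by (simp add: algebra_simps)
  then show False using \<open>k \<ge> 2\<close> t_pos by simp
qed

lemma card_leaves_eq_max_if_card_clique_3:
  assumes "card C = 3" "x \<in> C"
  shows "card (leaves x) = max_leaves"
proof -
  have "card (C - {x}) = 2" using assms finite_C by simp
  then obtain u w where uw: "C - {x} = {u, w}" "u \<noteq> w"
    by (auto simp: card_2_iff)
  then have "u \<in> C" "w \<in> C" by auto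
  then obtain S where SV: "S \<subseteq> V" and CS: "C \<inter> S = C - {u, w}"
    and small: "real (card S) < t * (2 + real (card (isolated_I E S)))"
    using clique_edge_separator uw(2) by metis
  have "C \<inter> S = {x}" using CS uw assms(2) by blast
  then have "x \<in> S" by blast
  then have "1 \<le> card S"
    using SV finite_V by (auto simp: Suc_le_eq card_gt_0_iff finite_subset)
  moreover have "card (isolated_I E S) \<le> card (leaves x)"
    using isolated_I_subset_leaves[of S] \<open>C \<inter> S = {x}\<close>
    by (intro card_mono finite_leaves) auto
  then have "t * (2 + real (card (isolated_I E S))) \<le> t * (2 + real (card (leaves x)))"
    using t_pos by (intro mult_left_mono) auto
  moreover obtain x0 where "x0 \<in> C" "card (leaves x0) = max_leaves" by (rule max_leaves_attained)
  then have "t * (1 + real max_leaves) \<le> 1" using leaves_bound[of x0] assms(1) by simp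
  ultimately have "t * (1 + real max_leaves) < t * (2 + real (card (leaves x)))"
    using small by linarith
  then have "max_leaves \<le> card (leaves x)" using t_pos by simp
  then show ?thesis using card_leaves_le_max[OF assms(2)] by simp
qed

lemma degree_indep: "y \<in> I \<Longrightarrow> degree V E y = 1"
proof -
  assume y: "y \<in> I"
  obtain x where x: "{x, y} \<in> E" using indep_has_neighbour[OF y] by blast
  have "{u \<in> V. {u, y} \<in> E} = {x}"
    using x edge_endpoints[OF x] indep_neighbour_unique[OF y x] by blast
  then show ?thesis by (simp add: degree_def)
qed

lemma degree_clique:
  assumes "x \<in> C"
  shows "degree V E x = card C - 1 + card (leaves x)"
proof -
  have "{u \<in> V. {u, x} \<in> E} = (C - {x}) \<union> leaves x"
    using assms clique_edge V_eq edge_endpoints by (auto simp: leaves_def insert_commute)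
  moreover have "(C - {x}) \<inter> leaves x = {}"
    using clique_indep_disjoint by (auto simp: leaves_def)
  ultimately show ?thesis
    using assms finite_C finite_leaves by (simp add: degree_def card_Un_disjoint)
qed

text \<open>The paper's b, which is the largest number of components of G - x over x in C
  (see num_comp_singleton).\<close>

definition denom :: nat where
  "denom = (if card C = 1 then max_leaves else max_leaves + 1)"

lemma num_comp_max_leaves_vertex:
  assumes "x \<in> C" "card (leaves x) = max_leaves"
  shows "num_comp V E {x} = denom"
proof -
  have "C = {x} \<longleftrightarrow> card C = 1"
    using assms(1) finite_C by (auto simp: card_1_singleton_iff)
  then show ?thesis using num_comp_singleton[OF assms(1)] assms(2) by (simp add: denom_def)
qed

lemma denom_pos: "0 < denom"
proof (cases "card C = 1")
  case True
  then obtain x where "C = {x}" by (rule card_1_singletonE)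
  moreover have "I \<noteq> {}" using two_le_card_V V_eq \<open>card C = 1\<close> by auto
  then obtain y where "y \<in> I" by blast
  moreover obtain z where "{z, y} \<in> E" using indep_has_neighbour[OF \<open>y \<in> I\<close>] by blast
  ultimately have "y \<in> leaves x" using neighbour_of_indep by (auto simp: leaves_def)
  then have "0 < card (leaves x)" using finite_leaves card_gt_0_iff by blast
  moreover have "denom = max_leaves" using True by (simp add: denom_def)
  ultimately show ?thesis using card_leaves_le_max[of x] \<open>C = {x}\<close> by simp
qed (simp add: denom_def)

lemma tough_inverse_denom: "tough (1 / real denom) V E"
proof -
  have "real (num_comp V E S) \<le> real denom * real (card S)" if S: "cutset V E S" for S
  proof -
    have SV: "S \<subseteq> V" and two: "2 \<le> num_comp V E S" using S by (auto simp: cutset_def)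
    have "num_comp V E S \<le> denom * card (C \<inter> S)"
    proof (cases "C \<subseteq> S")
      case True
      then show ?thesis
        using num_comp_eq[OF SV] card_isolated_I_le[of S]
        by (simp add: denom_def)
    next
      case False
      then have n: "num_comp V E S = 1 + card (isolated_I E S)" using num_comp_eq[OF SV] by simp
      then have "1 \<le> card (C \<inter> S)"
        using two card_isolated_I_le[of S] by (cases "card (C \<inter> S)") auto
      moreover have "card C \<noteq> 1"
        using False \<open>1 \<le> card (C \<inter> S)\<close> by (auto simp: card_1_singleton_iff)
      ultimately show ?thesis
        using n card_isolated_I_le[of S] by (simp add: denom_def algebra_simps)
    qed
    also have "\<dots> \<le> denom * card S"
      using SV finite_V by (intro mult_le_mono2 card_mono) (auto intro: finite_subset)
    finally show ?thesis by (metis of_nat_le_iff of_nat_mult)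
  qed
  moreover have "0 < 1 / real denom" using denom_pos by simp
  ultimately show ?thesis
    using denom_pos by (simp add: tough_iff field_simps)
qed

lemma two_le_denom: "2 \<le> denom"
proof -
  have "1 / real denom \<le> t"
    using le_t_if_tough[OF _ tough_inverse_denom] denom_pos by simp
  then have "1 / real denom \<le> 1 / 2" using t_le_half by linarith
  then have "2 \<le> real denom" using denom_pos by (simp add: field_simps)
  then show ?thesis by linarith
qed

lemma t_eq_inverse_denom: "t = 1 / real denom"
proof (rule antisym)
  obtain x where x: "x \<in> C" "card (leaves x) = max_leaves" by (rule max_leaves_attained)
  then have "cutset V E {x}"
    using num_comp_max_leaves_vertex two_le_denom V_eq by (simp add: cutset_def)
  then have "t * real denom \<le> 1"
    using cutset_bound num_comp_max_leaves_vertex[OF x] by fastforce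
  then show "t \<le> 1 / real denom" using denom_pos by (simp add: field_simps)
  show "1 / real denom \<le> t"
    using le_t_if_tough[OF _ tough_inverse_denom] denom_pos by simp
qed

lemma internal_vertices_subset_clique: "internal_vertices V E \<subseteq> C"
  using degree_indep V_eq by (auto simp: internal_vertices_def)

lemma is_tree_if_card_clique_le_2:
  assumes "card C \<le> 2"
  shows "is_tree V E"
  unfolding is_tree_def
proof (intro conjI notI connected)
  assume "\<exists>xs. is_cycle V E xs"
  then obtain xs where xs: "is_cycle V E xs" by blast
  have "set xs \<subseteq> C"
  proof
    fix v assume "v \<in> set xs"
    then obtain a b where "a \<noteq> b" "{a, v} \<in> E" "{b, v} \<in> E"
      using is_cycle_two_neighbours[OF xs] by blast
    then show "v \<in> C"
      using indep_neighbour_unique[of v a b] xs \<open>v \<in> set xs\<close> V_eq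
      by (auto simp: is_cycle_def)
  qed
  then have "length xs \<le> card C"
    using xs finite_C by (metis card_mono distinct_card is_cycle_def)
  then show False using xs assms by (simp add: is_cycle_def)
qed

lemma max_degree_eq_denom:
  assumes "card C \<le> 2"
  shows "max_degree V E = denom"
  unfolding max_degree_def
proof (rule Max_eqI)
  show "finite (degree V E ` V)" using finite_V by simp
  have "card C \<noteq> 0" using clique_nonempty finite_C by simp
  then have denom_eq: "card C - 1 + max_leaves = denom"
    using assms by (auto simp: denom_def)
  show "d \<le> denom" if "d \<in> degree V E ` V" for d
    using that degree_indep degree_clique card_leaves_le_max two_le_denom V_eq denom_eq
    by fastforce
  obtain x where "x \<in> C" "card (leaves x) = max_leaves" by (rule max_leaves_attained)
  then show "denom \<in> degree V E ` V"
    using degree_clique denom_eq V_eq by (metis UnI1 image_eqI)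
qed

end

theorem mainTheorem6:
  fixes V :: "'a set" and E :: "'a set set" and C I :: "'a set" and t :: real
  assumes "graph V E"
    and "t \<in> \<rat>" and "t > 0" and "t \<le> 1/2"
    and "split_partition V E C I"
    and "minimally_tough t V E"
  shows "\<exists>b::nat. b > 0 \<and> t = 1 / real b \<and> card C \<le> 3 \<and>
           ((is_tree V E \<and> card (internal_vertices V E) \<le> 2 \<and> max_degree V E = b) \<or>
            (card C = 3 \<and> (\<forall>v\<in>I. degree V E v = 1) \<and> (\<forall>v\<in>C. degree V E v = b + 1)))"
proof -
  interpret min_tough_split_graph V E C I t
    using assms by unfold_locales
  have "(is_tree V E \<and> card (internal_vertices V E) \<le> 2 \<and> max_degree V E = denom) \<or>
        (card C = 3 \<and> (\<forall>v\<in>I. degree V E v = 1) \<and> (\<forall>v\<in>C. degree V E v = denom + 1))"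
  proof (cases "card C \<le> 2")
    case True
    then have "card (internal_vertices V E) \<le> 2"
      using card_mono[OF finite_C internal_vertices_subset_clique] by simp
    then show ?thesis
      using True is_tree_if_card_clique_le_2 max_degree_eq_denom by simp
  next
    case False
    then have "card C = 3" using card_clique_le_3 by simp
    then show ?thesis
      using degree_indep degree_clique card_leaves_eq_max_if_card_clique_3 by (simp add: denom_def)
  qed
  then show ?thesis
    using denom_pos t_eq_inverse_denom card_clique_le_3 by blast
qed

end
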